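(* In $U(gl(m|n+1))$, each $\tau_k$ ($k\ge0$) can be expressed as a polynomial in the Casimir elements $I_j$ and $\hat I_j$ with $j\le k$, and each $\sigma_\ell$ ($\ell\ge0$) can be expressed as a polynomial in the Casimir elements $I_j$ and $\hat I_j$ with $j\le\ell+2$.
   Context: Over $\mathbb{C}$, $N=m+n+1$, parity $(p)=0$ for $1\le p\le m$, $(p)=1$ for $m<p\le N$. $gl(m|n+1)$ has homogeneous basis $E_{pq}$ ($1\le p,q\le N$) of parity $(p)+(q)$ with graded bracket $[E_{pq},E_{rs}]=\delta_{qr}E_{ps}-(-1)^{((p)+(q))((r)+(s))}\delta_{ps}E_{rq}$; $gl(m|n)$ is the subalgebra spanned by $E_{pq}$ with $p,q\le m+n$. Let $\mathcal B^p_{\ q}=(-1)^{(p)}E_{pq}$ ($1\le p,q\le N$) and let $\mathcal A$ be its upper-left $(m+n)\times(m+n)$ submatrix, $\mathcal A^p_{\ q}=(-1)^{(p)}E_{pq}$ ($1\le p,q\le m+n$). Powers: $(X^k)^p_{\ q}=\sum_rX^p_{\ r}(X^{k-1})^r_{\ q}$ (sum over the index range of $X$), $X^0$ the identity. Define $\tau_k=(\mathcal B^k)^N_{\ N}$, $\sigma_\ell=\sum_{p,q=1}^{m+n}\mathcal B^N_{\ p}(\mathcal A^\ell)^p_{\ q}\mathcal B^q_{\ N}$, and the Casimir elements $\hat I_k=\sum_{p=1}^N(-1)^{(p)}(\mathcal B^k)^p_{\ p}$ of $gl(m|n+1)$ and $I_k=\sum_{p=1}^{m+n}(-1)^{(p)}(\mathcal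 A^k)^p_{\ p}$ of $gl(m|n)$. Polynomials have complex coefficients (which may depend on $m,n$). *)

theory Defs
  imports Complex_Main
begin

definition par :: "nat \<Rightarrow> nat \<Rightarrow> nat" where
  "par m p = (if p \<le> m then 0 else 1)"

text \<open>A unital associative complex algebra structure on a ring 'a:
  a unital ring homomorphism from the complex numbers into the centre.\<close>
definition complex_alg :: "(complex \<Rightarrow> 'a::ring_1) \<Rightarrow> bool" where
  "complex_alg emb \<longleftrightarrow>
     emb 1 = 1 \<and>
     (\<forall>x y. emb (x + y) = emb x + emb y) \<and>
     (\<forall>x y. emb (x * y) = emb x * emb y) \<and>
     (\<forall>x a. emb x * a = a * emb x)"

text \<open>Defining relations of U(gl(m|n+1)) on the images E p q of the basis E_pq
  (1 \<le> p,q \<le> N = m+n+1), i.e. the graded bracket realised by graded commutators.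
  A family satisfying these relations in an associative algebra is the same as an
  algebra homomorphism out of the universal enveloping algebra.\<close>
definition gl_rel :: "nat \<Rightarrow> nat \<Rightarrow> (nat \<Rightarrow> nat \<Rightarrow> 'a::ring_1) \<Rightarrow> bool" where
  "gl_rel m n E \<longleftrightarrow>
     (\<forall>p\<in>{1..m+n+1}. \<forall>q\<in>{1..m+n+1}. \<forall>r\<in>{1..m+n+1}. \<forall>s\<in>{1..m+n+1}.
        E p q * E r s
          - (-1) ^ ((par m p + par m q) * (par m r + par m s)) * (E r s * E p q)
        = (if q = r then E p s else 0)
          - (-1) ^ ((par m p + par m q) * (par m r + par m s)) * (if p = s then E r q else 0))"

definition Bmat :: "nat \<Rightarrow> (nat \<Rightarrow> nat \<Rightarrow> 'a::ring_1) \<Rightarrow> nat \<Rightarrow> nat \<Rightarrow> 'a" where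
  "Bmat m E p q = (-1) ^ par m p * E p q"

fun matpow :: "(nat \<Rightarrow> nat \<Rightarrow> 'a::ring_1) \<Rightarrow> nat \<Rightarrow> nat \<Rightarrow> nat \<Rightarrow> nat \<Rightarrow> 'a" where
  "matpow X d 0 p q = (if p = q then 1 else 0)"
| "matpow X d (Suc k) p q = (\<Sum>r\<in>{1..d}. X p r * matpow X d k r q)"

text \<open>\<A> is the upper-left (m+n)x(m+n) block of \<B>, so its powers are matpow with d = m+n.\<close>

definition tau :: "nat \<Rightarrow> nat \<Rightarrow> (nat \<Rightarrow> nat \<Rightarrow> 'a::ring_1) \<Rightarrow> nat \<Rightarrow> 'a" where
  "tau m n E k = matpow (Bmat m E) (m+n+1) k (m+n+1) (m+n+1)"

definition sigma :: "nat \<Rightarrow> nat \<Rightarrow> (nat \<Rightarrow> nat \<Rightarrow> 'a::ring_1) \<Rightarrow> nat \<Rightarrow> 'a" where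
  "sigma m n E l = (\<Sum>p\<in>{1..m+n}. \<Sum>q\<in>{1..m+n}.
       Bmat m E (m+n+1) p * matpow (Bmat m E) (m+n) l p q * Bmat m E q (m+n+1))"

definition Ihat :: "nat \<Rightarrow> nat \<Rightarrow> (nat \<Rightarrow> nat \<Rightarrow> 'a::ring_1) \<Rightarrow> nat \<Rightarrow> 'a" where
  "Ihat m n E k = (\<Sum>p\<in>{1..m+n+1}. (-1) ^ par m p * matpow (Bmat m E) (m+n+1) k p p)"

definition Icas :: "nat \<Rightarrow> nat \<Rightarrow> (nat \<Rightarrow> nat \<Rightarrow> 'a::ring_1) \<Rightarrow> nat \<Rightarrow> 'a" where
  "Icas m n E k = (\<Sum>p\<in>{1..m+n}. (-1) ^ par m p * matpow (Bmat m E) (m+n) k p p)"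

datatype pexpr = PConst complex | VarI nat | VarIh nat | PAdd pexpr pexpr | PMul pexpr pexpr

fun pvars_le :: "nat \<Rightarrow> pexpr \<Rightarrow> bool" where
  "pvars_le b (PConst c) = True"
| "pvars_le b (VarI j) = (j \<le> b)"
| "pvars_le b (VarIh j) = (j \<le> b)"
| "pvars_le b (PAdd x y) = (pvars_le b x \<and> pvars_le b y)"
| "pvars_le b (PMul x y) = (pvars_le b x \<and> pvars_le b y)"

fun peval :: "(complex \<Rightarrow> 'a::ring_1) \<Rightarrow> (nat \<Rightarrow> 'a) \<Rightarrow> (nat \<Rightarrow> 'a) \<Rightarrow> pexpr \<Rightarrow> 'a" where
  "peval emb I Ih (PConst c) = emb c"
| "peval emb I Ih (VarI j) = I j"
| "peval emb I Ih (VarIh j) = Ih j"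
| "peval emb I Ih (PAdd x y) = peval emb I Ih x + peval emb I Ih y"
| "peval emb I Ih (PMul x y) = peval emb I Ih x * peval emb I Ih y"

end

theory Submission
  imports Defs
begin

text \<open>
  Write \<B> in block form with upper-left block \<A>, last column c and last row r. Then
  (\<B>^k)^p_q = (\<A>^k)^p_q + \<Sum>_{j<k} (\<B>^j)^p_N (r \<A>^{k-1-j})_q, and the corner entries obey
  \<tau>_{j+1} = \<tau>_1 \<tau>_j + \<Sum>_{i<j} \<sigma>_i \<tau>_{j-1-i}. Taking supertraces,
  Ihat_k = I_k - \<tau>_k + (cross terms), and the commutation relations of E_ab with entries of
  \<B>^j and \<A>^l reduce every cross term to products of I's, \<tau>'s and \<sigma>'s of lower degree,
  except that \<sigma>_{k-2} occurs with total coefficient -k. As k is invertible over \<complex>, induction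
  on k expresses \<sigma>_{k-2} and then \<tau>_k through the Casimir elements of degree at most k.
\<close>

text \<open>Signs (-1)^s are kept as boolean flags s, so that sign bookkeeping is propositional.\<close>

definition signed :: "bool \<Rightarrow> 'a::ring_1 \<Rightarrow> 'a" where
  "signed s y = (if s then - y else y)"

lemma signed_simps [simp]:
  "signed False y = y" "signed True y = - y"
  "signed s (x + y) = signed s x + signed s y"
  "signed s (x - y) = signed s x - signed s y"
  "signed s 0 = 0"
  "signed s x * y = signed s (x * y)"
  "x * signed s y = signed s (x * y)"
  "signed s (signed t x) = signed (s \<noteq> t) x"
  "signed s (- x) = - signed s x"
  by (auto simp: signed_def)

lemma signed_sum: "signed s (sum f A) = (\<Sum>i\<in>A. signed s (f i))"
  by (auto simp: signed_def sum_negf)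

lemma mult_if_one_zero [simp]:
  "x * (if c then 1 else 0) = (if c then x else 0)"
  "(if c then 1 else 0) * x = (if c then x else 0)" for x :: "'a::ring_1"
  by simp_all

lemma matpow_Suc_right:
  assumes "p \<in> {1..d}" "q \<in> {1..d}"
  shows "matpow X d (Suc k) p q = (\<Sum>r\<in>{1..d}. matpow X d k p r * X r q)"
  using assms(1)
proof (induction k arbitrary: p)
  case 0
  then show ?case using assms(2) by (simp add: sum.delta sum.delta')
next
  case (Suc k)
  have "matpow X d (Suc (Suc k)) p q = (\<Sum>s\<in>{1..d}. X p s * (\<Sum>r\<in>{1..d}. matpow X d k s r * X r q))"
    unfolding matpow.simps(2)[of X d "Suc k"] by (intro sum.cong refl arg_cong2[where f=times] Suc.IH)
  also have "\<dots> = (\<Sum>r\<in>{1..d}. (\<Sum>s\<in>{1..d}. X p s * matpow X d k s r) * X r q)"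
    by (simp add: sum_distrib_left sum_distrib_right mult.assoc) (rule sum.swap)
  finally show ?case by simp
qed

locale gl_family =
  fixes m n :: nat and E :: "nat \<Rightarrow> nat \<Rightarrow> 'a::ring_1"
  assumes relations: "gl_rel m n E"
begin

abbreviation "M \<equiv> m + n"
abbreviation "N \<equiv> Suc M"
abbreviation "B \<equiv> Bmat m E"
abbreviation "Bpow d k \<equiv> matpow B d k"
abbreviation "Apow \<equiv> Bpow M"

definition odd_index :: "nat \<Rightarrow> bool" where
  "odd_index p = (m < p)"

text \<open>The sign of the graded commutator of E_ab and E_pq is -1 iff both are odd.\<close>

definition both_odd :: "nat \<Rightarrow> nat \<Rightarrow> nat \<Rightarrow> nat \<Rightarrow> bool" where
  "both_odd a b p q = ((odd_index a \<noteq> odd_index b) \<and> (odd_index p \<noteq> odd_index q))"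

lemma both_odd_simps [simp]:
  "both_odd a b p p = False"
  "both_odd a b b a = (odd_index a \<noteq> odd_index b)"
  by (auto simp: both_odd_def)

lemma odd_index_N: "odd_index N"
  by (simp add: odd_index_def)

lemma Bmat_eq_signed: "B p q = signed (odd_index p) (E p q)"
  by (auto simp: Bmat_def par_def odd_index_def signed_def)

lemma E_eq_signed: "E p q = signed (odd_index p) (B p q)"
  by (simp add: Bmat_eq_signed)

lemma graded_commutator:
  assumes "a \<in> {1..N}" "b \<in> {1..N}" "p \<in> {1..N}" "q \<in> {1..N}"
  shows "E a b * E p q = signed (both_odd a b p q) (E p q * E a b) + (if b = p then E a q else 0)
            - signed (both_odd a b p q) (if a = q then E p b else 0)"
proof -
  have sign: "(-1) ^ ((par m a + par m b) * (par m p + par m q)) * y = signed (both_odd a b p q) y"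
    for y :: 'a
    by (auto simp: par_def both_odd_def odd_index_def signed_def)
  have "E a b * E p q - (-1) ^ ((par m a + par m b) * (par m p + par m q)) * (E p q * E a b)
        = (if b = p then E a q else 0)
          - (-1) ^ ((par m a + par m b) * (par m p + par m q)) * (if a = q then E p b else 0)"
    using relations assms unfolding gl_rel_def Suc_eq_plus1 by blast
  then show ?thesis unfolding sign by (simp add: algebra_simps)
qed

lemma E_mult_B_mult:
  assumes "a \<in> {1..N}" "b \<in> {1..N}" "p \<in> {1..N}" "r \<in> {1..N}"
  shows "E a b * (B p r * X) = signed (both_odd a b p r) (B p r * (E a b * X))
           + (if b = p then signed (odd_index a \<noteq> odd_index b) (B a r * X) else 0)
           - (if a = r then signed (both_odd a b p r) (B p b * X) else 0)"
proof -
  have "E a b * (B p r * X) = signed (odd_index p) (E a b * E p r * X)"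
    by (simp add: Bmat_eq_signed mult.assoc)
  also have "\<dots> = signed (odd_index p) ((signed (both_odd a b p r) (E p r * E a b)
      + (if b = p then E a r else 0) - signed (both_odd a b p r) (if a = r then E p b else 0)) * X)"
    by (simp only: graded_commutator[OF assms])
  also have "\<dots> = signed (both_odd a b p r) (B p r * (E a b * X))
           + (if b = p then signed (odd_index a \<noteq> odd_index b) (B a r * X) else 0)
           - (if a = r then signed (both_odd a b p r) (B p b * X) else 0)"
    by (cases "odd_index a"; cases "odd_index b"; cases "odd_index p"; cases "odd_index r")
      (auto simp: E_eq_signed both_odd_def algebra_simps)
  finally show ?thesis .
qed

lemma E_mult_Bpow:
  assumes d: "d \<le> N" and ab: "a \<in> {1..d}" "b \<in> {1..d}"
  shows "p \<in> {1..d} \<Longrightarrow> q \<in> {1..d} \<Longrightarrow>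
    E a b * Bpow d k p q = signed (both_odd a b p q) (Bpow d k p q * E a b)
      + (if b = p then signed (odd_index a \<noteq> odd_index b) (Bpow d k a q) else 0)
      - (if a = q then signed (both_odd a b p q) (Bpow d k p b) else 0)"
proof (induction k arbitrary: p q)
  case 0
  then show ?case by (cases "p = q"; cases "a = q"; cases "b = p") simp_all
next
  case (Suc k)
  have in_N: "x \<in> {1..d} \<Longrightarrow> x \<in> {1..N}" for x
    using d by auto
  have sign_a: "both_odd a b p a = (both_odd a b p b \<noteq> (odd_index a \<noteq> odd_index b))"
    by (auto simp: both_odd_def)
  \<comment> \<open>the two c-terms cancel once summed over r\<close>
  define c where "c = signed (both_odd a b p a) (B p b * Bpow d k a q)"
  have summand: "E a b * (B p r * Bpow d k r q) =
      signed (both_odd a b p q) (B p r * Bpow d k r q * E a b)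
      + (if b = p then signed (odd_index a \<noteq> odd_index b) (B a r * Bpow d k r q) else 0)
      - (if a = q then signed (both_odd a b p q) (B p r * Bpow d k r b) else 0)
      + (if r = b then c else 0) - (if r = a then c else 0)"
    if r: "r \<in> {1..d}" for r
    unfolding E_mult_B_mult[OF in_N[OF ab(1)] in_N[OF ab(2)] in_N[OF Suc.prems(1)] in_N[OF r]]
      Suc.IH[OF r Suc.prems(2)] c_def sign_a
    by (cases "odd_index a"; cases "odd_index b"; cases "odd_index p"; cases "odd_index q";
        cases "odd_index r") (auto simp: both_odd_def algebra_simps)
  have "E a b * Bpow d (Suc k) p q = (\<Sum>r\<in>{1..d}. E a b * (B p r * Bpow d k r q))"
    by (simp add: sum_distrib_left)
  also have "\<dots> = signed (both_odd a b p q) (Bpow d (Suc k) p q * E a b)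
      + (if b = p then signed (odd_index a \<noteq> odd_index b) (Bpow d (Suc k) a q) else 0)
      - (if a = q then signed (both_odd a b p q) (Bpow d (Suc k) p b) else 0)
      + (\<Sum>r\<in>{1..d}. if r = b then c else 0) - (\<Sum>r\<in>{1..d}. if r = a then c else 0)"
    by (simp add: summand sum.distrib sum_subtractf signed_sum sum_distrib_right)
  finally show ?case
    using ab by simp
qed

abbreviation "\<tau> \<equiv> tau m n E"
abbreviation "\<sigma> \<equiv> sigma m n E"
abbreviation "I \<equiv> Icas m n E"
abbreviation "Ih \<equiv> Ihat m n E"

definition col :: "nat \<Rightarrow> nat \<Rightarrow> 'a" where
  "col j p = Bpow N j p N"

definition row :: "nat \<Rightarrow> nat \<Rightarrow> 'a" where
  "row l x = (\<Sum>y\<in>{1..M}. B N y * Apow l y x)"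

lemma tau_eq: "\<tau> j = Bpow N j N N"
  by (simp add: tau_def)

lemma tau_0: "\<tau> 0 = 1"
  by (simp add: tau_eq)

lemma tau_1: "\<tau> 1 = B N N"
  by (simp add: tau_eq sum.delta)

lemma tau_Suc_col: "\<tau> (Suc j) = B N N * \<tau> j + (\<Sum>r\<in>{1..M}. B N r * col j r)"
  by (simp add: tau_eq col_def)

lemma col_0: "p \<in> {1..M} \<Longrightarrow> col 0 p = 0"
  by (simp add: col_def)

lemma col_Suc: "col (Suc j) p = (\<Sum>r\<in>{1..M}. B p r * col j r) + B p N * \<tau> j"
  by (simp add: col_def tau_eq)

lemma row_0: "x \<in> {1..M} \<Longrightarrow> row 0 x = B N x"
  by (simp add: row_def sum.delta)

lemma row_Suc: "x \<in> {1..M} \<Longrightarrow> row (Suc l) x = (\<Sum>r\<in>{1..M}. row l r * B r x)"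
proof -
  assume x: "x \<in> {1..M}"
  have "row (Suc l) x = (\<Sum>y\<in>{1..M}. B N y * (\<Sum>r\<in>{1..M}. Apow l y r * B r x))"
    unfolding row_def by (intro sum.cong refl arg_cong2[where f=times] matpow_Suc_right x) simp
  also have "\<dots> = (\<Sum>r\<in>{1..M}. row l r * B r x)"
    unfolding row_def by (simp add: sum_distrib_left sum_distrib_right mult.assoc) (rule sum.swap)
  finally show ?thesis .
qed

lemma sigma_eq_row: "\<sigma> l = (\<Sum>r\<in>{1..M}. row l r * B r N)"
  unfolding sigma_def row_def by (simp add: sum_distrib_right) (rule sum.swap)

lemma Icas_eq: "I k = (\<Sum>p\<in>{1..M}. signed (odd_index p) (Apow k p p))"
  by (auto simp: Icas_def par_def signed_def odd_index_def intro!: sum.cong)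

lemma Ihat_eq: "Ih k = (\<Sum>p\<in>{1..M}. signed (odd_index p) (Bpow N k p p)) - \<tau> k"
  by (auto simp: Ihat_def tau_def par_def signed_def odd_index_def intro!: sum.cong)

lemma Bpow_block:
  assumes p: "p \<in> {1..M}"
  shows "q \<in> {1..M} \<Longrightarrow> Bpow N k p q = Apow k p q + (\<Sum>j<k. col j p * row (k - 1 - j) q)"
proof (induction k arbitrary: q)
  case 0
  then show ?case by simp
next
  case (Suc k)
  have "Bpow N (Suc k) p q = (\<Sum>r\<in>{1..M}. Bpow N k p r * B r q) + col k p * B N q"
    using p Suc.prems by (simp add: matpow_Suc_right col_def del: matpow.simps)
  also have "(\<Sum>r\<in>{1..M}. Bpow N k p r * B r q)
      = (\<Sum>r\<in>{1..M}. (Apow k p r + (\<Sum>j<k. col j p * row (k - 1 - j) r)) * B r q)"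
    by (intro sum.cong) (auto simp: Suc.IH)
  also have "\<dots> = Apow (Suc k) p q + (\<Sum>r\<in>{1..M}. (\<Sum>j<k. col j p * row (k - 1 - j) r) * B r q)"
    using p Suc.prems by (simp add: distrib_right sum.distrib matpow_Suc_right del: matpow.simps)
  also have "(\<Sum>r\<in>{1..M}. (\<Sum>j<k. col j p * row (k - 1 - j) r) * B r q)
      = (\<Sum>j<k. col j p * (\<Sum>r\<in>{1..M}. row (k - 1 - j) r * B r q))"
    by (simp add: sum_distrib_left sum_distrib_right mult.assoc) (rule sum.swap)
  also have "(\<Sum>j<k. col j p * (\<Sum>r\<in>{1..M}. row (k - 1 - j) r * B r q)) = (\<Sum>j<k. col j p * row (k - j) q)"
  proof (intro sum.cong refl)
    fix j
    assume "j \<in> {..<k}"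
    then have "k - j = Suc (k - 1 - j)"
      by auto
    then show "col j p * (\<Sum>r\<in>{1..M}. row (k - 1 - j) r * B r q) = col j p * row (k - j) q"
      by (simp only: row_Suc[OF Suc.prems])
  qed
  finally show ?case
    by (simp add: lessThan_Suc row_0[OF Suc.prems])
qed

lemma E_mult_col:
  assumes "a \<in> {1..M}" "b \<in> {1..M}" "x \<in> {1..M}"
  shows "E a b * col j x = signed (both_odd a b x N) (col j x * E a b)
           + (if b = x then signed (odd_index a \<noteq> odd_index b) (col j a) else 0)"
  using E_mult_Bpow[of N a b x N j] assms unfolding col_def by auto

lemma B_mult_tau:
  assumes "p \<in> {1..M}"
  shows "B p N * \<tau> j = \<tau> j * B p N - col j p"
proof -
  have "E p N * \<tau> j = \<tau> j * E p N + signed (odd_index p \<noteq> odd_index N) (col j p)"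
    using E_mult_Bpow[of N p N N N j] assms unfolding tau_eq col_def by auto
  then show ?thesis
    unfolding Bmat_eq_signed using odd_index_N by (cases "odd_index p") auto
qed

lemma E_mult_row:
  assumes a: "a \<in> {1..M}" and b: "b \<in> {1..M}" and x: "x \<in> {1..M}"
  shows "E a b * row l x = signed (both_odd a b N x) (row l x * E a b)
           - (if a = x then signed (both_odd a b N x) (row l b) else 0)"
proof -
  have in_N: "y \<in> {1..M} \<Longrightarrow> y \<in> {1..N}" for y
    by auto
  have N: "N \<in> {1..N}" and M_le_N: "M \<le> N"
    by simp_all
  have sign_a: "both_odd a b N a = (both_odd a b N b \<noteq> (odd_index a \<noteq> odd_index b))"
    by (auto simp: both_odd_def)
  define c where "c = signed (both_odd a b N a) (B N b * Apow l a x)"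
  have summand: "E a b * (B N y * Apow l y x) = signed (both_odd a b N x) (B N y * Apow l y x * E a b)
      - (if a = x then signed (both_odd a b N x) (B N y * Apow l y b) else 0)
      + (if y = b then c else 0) - (if y = a then c else 0)"
    if y: "y \<in> {1..M}" for y
    using b unfolding E_mult_B_mult[OF in_N[OF a] in_N[OF b] N in_N[OF y]]
      E_mult_Bpow[OF M_le_N a b y x] c_def sign_a
    by (cases "odd_index a"; cases "odd_index b"; cases "odd_index x"; cases "odd_index y")
      (auto simp: both_odd_def algebra_simps odd_index_N)
  have "E a b * row l x = (\<Sum>y\<in>{1..M}. E a b * (B N y * Apow l y x))"
    by (simp add: row_def sum_distrib_left)
  also have "\<dots> = signed (both_odd a b N x) (row l x * E a b)
      - (if a = x then signed (both_odd a b N x) (row l b) else 0)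
      + (\<Sum>y\<in>{1..M}. if y = b then c else 0) - (\<Sum>y\<in>{1..M}. if y = a then c else 0)"
    by (simp add: summand row_def sum.distrib sum_subtractf signed_sum sum_distrib_right)
  finally show ?thesis
    using a b by simp
qed

definition row_commutator :: "nat \<Rightarrow> nat \<Rightarrow> nat \<Rightarrow> 'a" where
  "row_commutator l a x = signed (odd_index a)
     (B N N * Apow l a x - Apow (Suc l) a x + (\<Sum>t<l. \<sigma> t * Apow (l - 1 - t) a x))"

lemma row_commutator_Suc:
  assumes a: "a \<in> {1..M}" and x: "x \<in> {1..M}"
  shows "row_commutator (Suc l) a x
    = (\<Sum>r\<in>{1..M}. row_commutator l a r * B r x) + (if a = x then signed (odd_index a) (\<sigma> l) else 0)"
proof -
  have "(\<Sum>r\<in>{1..M}. row_commutator l a r * B r x) = signed (odd_index a) (B N N * (\<Sum>r\<in>{1..M}. Apow l a r * B r x)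
      - (\<Sum>r\<in>{1..M}. Apow (Suc l) a r * B r x) + (\<Sum>t<l. \<sigma> t * (\<Sum>r\<in>{1..M}. Apow (l - 1 - t) a r * B r x)))"
    unfolding row_commutator_def
    by (simp add: signed_sum sum_distrib_left sum_distrib_right algebra_simps sum.distrib sum_subtractf
        mult.assoc del: matpow.simps) (rule sum.swap)
  also have "\<dots> = signed (odd_index a) (B N N * Apow (Suc l) a x - Apow (Suc (Suc l)) a x
      + (\<Sum>t<l. \<sigma> t * Apow (Suc (l - 1 - t)) a x))"
    by (simp only: matpow_Suc_right[OF a x, symmetric])
  also have "(\<Sum>t<l. \<sigma> t * Apow (Suc (l - 1 - t)) a x) = (\<Sum>t<l. \<sigma> t * Apow (l - t) a x)"
    by (intro sum.cong) (auto simp: Suc_diff_Suc)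
  finally show ?thesis
    unfolding row_commutator_def using x
    by (simp add: lessThan_Suc algebra_simps del: matpow.simps) (simp add: signed_def)
qed

lemma E_last_mult_row:
  assumes a: "a \<in> {1..M}"
  shows "x \<in> {1..M} \<Longrightarrow> E a N * row l x = signed (both_odd a N N x) (row l x * E a N) + row_commutator l a x"
proof (induction l arbitrary: x)
  case 0
  have "E a N * E N x = signed (both_odd a N N x) (E N x * E a N) + E a x
      - signed (both_odd a N N x) (if a = x then E N N else 0)"
    using graded_commutator[of a N N x] a 0 by simp
  then show ?case
    using 0 unfolding row_commutator_def row_0[OF 0]
    by (cases "odd_index a"; cases "odd_index x")
      (auto simp: Bmat_eq_signed both_odd_def algebra_simps odd_index_N sum.delta)
next
  case (Suc l)
  have summand: "E a N * (row l r * B r x) = signed (both_odd a N N x) (row l r * B r x * E a N)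
      + row_commutator l a r * B r x + (if a = x then signed (odd_index a) (row l r * B r N) else 0)"
    if r: "r \<in> {1..M}" for r
  proof -
    have "E a N * (row l r * B r x) = (E a N * row l r) * B r x"
      by (simp add: mult.assoc)
    also have "\<dots> = signed (both_odd a N N r) (row l r * (E a N * B r x)) + row_commutator l a r * B r x"
      by (simp add: Suc.IH[OF r] algebra_simps)
    also have "E a N * B r x = signed (odd_index r) (E a N * E r x)"
      by (simp add: Bmat_eq_signed)
    also have "E a N * E r x = signed (both_odd a N r x) (E r x * E a N)
        - signed (both_odd a N r x) (if a = x then E r N else 0)"
      using graded_commutator[of a N r x] a r Suc.prems by auto
    finally show ?thesis
      by (cases "odd_index a"; cases "odd_index x"; cases "odd_index r")
        (auto simp: E_eq_signed[of a N] E_eq_signed[of r x] E_eq_signed[of r N] both_odd_def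
          algebra_simps odd_index_N)
  qed
  have "E a N * row (Suc l) x = (\<Sum>r\<in>{1..M}. E a N * (row l r * B r x))"
    by (simp add: row_Suc[OF Suc.prems] sum_distrib_left)
  also have "\<dots> = signed (both_odd a N N x) (row (Suc l) x * E a N) + row_commutator (Suc l) a x"
    by (simp add: summand sum.distrib signed_sum row_Suc[OF Suc.prems] sum_distrib_right
        sigma_eq_row row_commutator_Suc[OF a Suc.prems] add.assoc)
  finally show ?case .
qed

text \<open>The cross terms of the supertrace of \<B>^k (lemma Ihat_eq_mixed); commuting B_pr past col j
  in mixed (Suc j) l produces mixed_tau j l.\<close>

definition mixed :: "nat \<Rightarrow> nat \<Rightarrow> 'a" where
  "mixed j l = (\<Sum>p\<in>{1..M}. signed (odd_index p) (col j p * row l p))"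

definition mixed_tau :: "nat \<Rightarrow> nat \<Rightarrow> 'a" where
  "mixed_tau j l = (\<Sum>p\<in>{1..M}. signed (odd_index p) (B p N * \<tau> j * row l p))"

definition row_col :: "nat \<Rightarrow> nat \<Rightarrow> 'a" where
  "row_col l j = (\<Sum>r\<in>{1..M}. row l r * col j r)"

definition casimir_term :: "nat \<Rightarrow> 'a" where
  "casimir_term l = \<tau> 1 * I l - I (Suc l) + (\<Sum>t<l. \<sigma> t * I (l - 1 - t))"

lemma Ihat_eq_mixed: "Ih k = I k + (\<Sum>j<k. mixed j (k - 1 - j)) - \<tau> k"
proof -
  have "Ih k = (\<Sum>p\<in>{1..M}. signed (odd_index p) (Apow k p p + (\<Sum>j<k. col j p * row (k - 1 - j) p))) - \<tau> k"
    unfolding Ihat_eq by (simp add: Bpow_block del: matpow.simps)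
  also have "\<dots> = I k + (\<Sum>j<k. mixed j (k - 1 - j)) - \<tau> k"
    unfolding Icas_eq mixed_def by (simp add: sum.distrib signed_sum del: matpow.simps) (rule sum.swap)
  finally show ?thesis .
qed

lemma row_col_eq: "row_col l j = (\<Sum>i<j. \<sigma> (l + i) * \<tau> (j - 1 - i))"
proof (induction j arbitrary: l)
  case 0
  then show ?case by (simp add: row_col_def col_0)
next
  case (Suc j)
  have "row_col l (Suc j) = (\<Sum>s\<in>{1..M}. (\<Sum>r\<in>{1..M}. row l r * B r s) * col j s) + \<sigma> l * \<tau> j"
    unfolding row_col_def col_Suc sigma_eq_row
    by (simp add: sum.distrib distrib_left sum_distrib_left sum_distrib_right mult.assoc) (rule sum.swap)
  also have "(\<Sum>s\<in>{1..M}. (\<Sum>r\<in>{1..M}. row l r * B r s) * col j s) = row_col (Suc l) j"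
    unfolding row_col_def by (intro sum.cong) (auto simp: row_Suc)
  finally show ?case
    unfolding sum.lessThan_Suc_shift by (simp add: Suc.IH add.commute)
qed

lemma tau_Suc: "\<tau> (Suc j) = \<tau> 1 * \<tau> j + (\<Sum>i<j. \<sigma> i * \<tau> (j - 1 - i))"
proof -
  have "(\<Sum>r\<in>{1..M}. B N r * col j r) = row_col 0 j"
    unfolding row_col_def by (intro sum.cong) (auto simp: row_0)
  then show ?thesis
    unfolding tau_Suc_col[of j] tau_1 by (simp add: row_col_eq)
qed

lemma mixed_0: "mixed 0 l = 0"
  by (simp add: mixed_def col_0)

lemma tau_1_casimir: "\<tau> 1 = I 1 - Ih 1"
  using Ihat_eq_mixed[of 1] by (simp add: mixed_0)

lemma mixed_Suc: "mixed (Suc j) l = mixed j (Suc l) + mixed_tau j l"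
proof -
  have summand: "signed (odd_index p) (B p r * col j r * row l p)
      = signed (odd_index r) (col j r * (row l p * B p r))
        - signed (odd_index p \<noteq> odd_index r) (col j r * row l r)
        + signed (odd_index p \<noteq> odd_index r) (col j p * row l p)"
    if p: "p \<in> {1..M}" and r: "r \<in> {1..M}" for p r
  proof -
    have "signed (odd_index p) (B p r * col j r * row l p) = (E p r * col j r) * row l p"
      by (simp add: Bmat_eq_signed)
    also have "\<dots> = signed (both_odd p r r N) (col j r * (E p r * row l p))
        + signed (odd_index p \<noteq> odd_index r) (col j p * row l p)"
      by (simp add: E_mult_col[OF p r r] algebra_simps)
    also have "E p r * row l p = signed (both_odd p r N p) (row l p * E p r) - signed (both_odd p r N p) (row l r)"
      by (simp add: E_mult_row[OF p r p])
    finally show ?thesis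
      using odd_index_N by (cases "odd_index p"; cases "odd_index r")
        (auto simp: both_odd_def E_eq_signed[of p r] algebra_simps)
  qed
  have "mixed (Suc j) l = (\<Sum>p\<in>{1..M}. \<Sum>r\<in>{1..M}. signed (odd_index p) (B p r * col j r * row l p))
      + mixed_tau j l"
    unfolding mixed_def mixed_tau_def col_Suc
    by (simp add: sum.distrib signed_sum sum_distrib_right distrib_right)
  also have "(\<Sum>p\<in>{1..M}. \<Sum>r\<in>{1..M}. signed (odd_index p) (B p r * col j r * row l p))
      = (\<Sum>p\<in>{1..M}. \<Sum>r\<in>{1..M}. signed (odd_index r) (col j r * (row l p * B p r)))
        - (\<Sum>p\<in>{1..M}. \<Sum>r\<in>{1..M}. signed (odd_index p \<noteq> odd_index r) (col j r * row l r))
        + (\<Sum>p\<in>{1..M}. \<Sum>r\<in>{1..M}. signed (odd_index p \<noteq> odd_index r) (col j p * row l p))"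
    by (simp add: summand sum.distrib sum_subtractf)
  also have "(\<Sum>p\<in>{1..M}. \<Sum>r\<in>{1..M}. signed (odd_index p \<noteq> odd_index r) (col j r * row l r))
      = (\<Sum>p\<in>{1..M}. \<Sum>r\<in>{1..M}. signed (odd_index p \<noteq> odd_index r) (col j p * row l p))"
    by (subst sum.swap) (intro sum.cong refl, simp add: signed_def)
  also have "(\<Sum>p\<in>{1..M}. \<Sum>r\<in>{1..M}. signed (odd_index r) (col j r * (row l p * B p r)))
      = (\<Sum>r\<in>{1..M}. signed (odd_index r) (col j r * (\<Sum>p\<in>{1..M}. row l p * B p r)))"
    by (subst sum.swap) (simp add: signed_sum sum_distrib_left)
  also have "\<dots> = mixed j (Suc l)"
    unfolding mixed_def by (intro sum.cong) (auto simp: row_Suc)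
  finally show ?thesis
    by simp
qed

lemma mixed_tau_eq: "mixed_tau j l = \<tau> j * mixed_tau 0 l - mixed j l"
proof -
  have "mixed_tau j l = (\<Sum>p\<in>{1..M}. signed (odd_index p) ((\<tau> j * B p N - col j p) * row l p))"
    unfolding mixed_tau_def by (intro sum.cong) (auto simp: B_mult_tau)
  then show ?thesis
    unfolding mixed_tau_def mixed_def tau_0
    by (simp add: algebra_simps sum_subtractf sum_distrib_left signed_sum)
qed

lemma mixed_eq_sum: "mixed j l = (\<Sum>t<j. mixed_tau t (l + j - 1 - t))"
proof (induction j arbitrary: l)
  case 0
  then show ?case by (simp add: mixed_0)
next
  case (Suc j)
  have "(\<Sum>t<j. mixed_tau t (Suc l + j - 1 - t)) = (\<Sum>t<j. mixed_tau t (l + Suc j - 1 - t))"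
    by (intro sum.cong) auto
  then show ?case
    by (simp add: mixed_Suc Suc.IH)
qed

lemma mixed_tau_0: "mixed_tau 0 l = casimir_term l - \<sigma> l"
proof -
  have summand: "signed (odd_index p) (B p N * \<tau> 0 * row l p) = row_commutator l p p - row l p * B p N"
    if p: "p \<in> {1..M}" for p
  proof -
    have "signed (odd_index p) (B p N * \<tau> 0 * row l p) = E p N * row l p"
      by (simp add: tau_0 Bmat_eq_signed)
    also have "\<dots> = signed (both_odd p N N p) (row l p * E p N) + row_commutator l p p"
      by (rule E_last_mult_row[OF p p])
    finally show ?thesis
      using odd_index_N by (cases "odd_index p") (auto simp: both_odd_def E_eq_signed[of p N])
  qed
  have "mixed_tau 0 l = (\<Sum>p\<in>{1..M}. row_commutator l p p) - \<sigma> l"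
    unfolding mixed_tau_def by (simp add: summand sum_subtractf sigma_eq_row)
  also have "(\<Sum>p\<in>{1..M}. row_commutator l p p) = casimir_term l"
    unfolding row_commutator_def casimir_term_def Icas_eq tau_1
    by (simp add: signed_sum sum.distrib sum_subtractf sum_distrib_left del: matpow.simps) (rule sum.swap)
  finally show ?thesis .
qed

lemma sigma_from_Ihat:
  "of_nat (Suc (Suc L)) * \<sigma> L = I (Suc (Suc L)) - Ih (Suc (Suc L)) + of_nat (Suc L) * casimir_term L
     + (\<Sum>j<Suc L. \<Sum>t<j. mixed_tau (Suc t) (L - 1 - t)) - \<tau> 1 * \<tau> (Suc L)
     - (\<Sum>i<L. \<sigma> i * \<tau> (L - i))"
proof -
  define K where "K = Suc L"
  have "(\<Sum>j<Suc K. mixed j (Suc K - 1 - j)) = (\<Sum>j<Suc K. \<Sum>t<j. mixed_tau t (L - t))"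
    unfolding mixed_eq_sum K_def by (intro sum.cong) auto
  also have "\<dots> = (\<Sum>j<K. mixed_tau 0 L + (\<Sum>t<j. mixed_tau (Suc t) (L - 1 - t)))"
    by (simp only: sum.lessThan_Suc_shift) (simp add: add.commute)
  also have "\<dots> = of_nat K * mixed_tau 0 L + (\<Sum>j<K. \<Sum>t<j. mixed_tau (Suc t) (L - 1 - t))"
    by (simp add: sum.distrib)
  finally have "Ih (Suc K) = I (Suc K) + of_nat K * (casimir_term L - \<sigma> L)
      + (\<Sum>j<K. \<Sum>t<j. mixed_tau (Suc t) (L - 1 - t)) - \<tau> (Suc K)"
    unfolding Ihat_eq_mixed[of "Suc K"] mixed_tau_0 by (simp add: add.assoc)
  moreover have "\<tau> (Suc K) = \<tau> 1 * \<tau> K + (\<Sum>i<L. \<sigma> i * \<tau> (L - i)) + \<sigma> L"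
    unfolding tau_Suc[of K] by (simp add: K_def tau_0)
  ultimately show ?thesis
    unfolding K_def by (simp add: algebra_simps)
qed

end

lemma complex_alg_zero: "complex_alg emb \<Longrightarrow> emb 0 = 0"
  unfolding complex_alg_def by (metis add_cancel_right_right add_0)

lemma complex_alg_minus_one:
  assumes "complex_alg emb"
  shows "emb (-1) = -1"
proof -
  have "emb (-1) + 1 = emb (-1 + 1)"
    using assms unfolding complex_alg_def by metis
  then show ?thesis
    using complex_alg_zero[OF assms] by (simp add: eq_neg_iff_add_eq_0)
qed

lemma complex_alg_of_nat: "complex_alg emb \<Longrightarrow> emb (of_nat k) = of_nat k"
  by (induction k) (simp_all add: complex_alg_zero, simp add: complex_alg_def)

lemma complex_alg_inverse_of_nat:
  assumes "complex_alg emb"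
  shows "emb (inverse (of_nat (Suc k))) * of_nat (Suc k) = 1"
proof -
  have "emb (inverse (of_nat (Suc k))) * of_nat (Suc k) = emb (inverse (of_nat (Suc k)) * of_nat (Suc k))"
    using assms complex_alg_of_nat[OF assms, of "Suc k"] unfolding complex_alg_def by metis
  also have "\<dots> = 1"
    using assms unfolding complex_alg_def by (simp del: of_nat_Suc)
  finally show ?thesis .
qed

text \<open>A single polynomial works for every algebra and every family E satisfying the relations,
  i.e. it gives an identity in the enveloping algebra.\<close>

definition expressible ::
    "nat \<Rightarrow> nat \<Rightarrow> nat \<Rightarrow> ((complex \<Rightarrow> 'a::ring_1) \<Rightarrow> (nat \<Rightarrow> nat \<Rightarrow> 'a) \<Rightarrow> 'a) \<Rightarrow> bool" where
  "expressible m n b f \<longleftrightarrow> (\<exists>P. pvars_le b P \<and> (\<forall>emb E. complex_alg emb \<and> gl_rel m n E \<longrightarrow>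
      f emb E = peval emb (Icas m n E) (Ihat m n E) P))"

lemma pvars_le_mono: "pvars_le b P \<Longrightarrow> b \<le> c \<Longrightarrow> pvars_le c P"
  by (induction P) auto

lemma expressible_mono: "expressible m n b f \<Longrightarrow> b \<le> c \<Longrightarrow> expressible m n c f"
  unfolding expressible_def using pvars_le_mono by blast

lemma expressible_cong:
  "expressible m n b f \<Longrightarrow> (\<And>emb E. complex_alg emb \<Longrightarrow> gl_rel m n E \<Longrightarrow> g emb E = f emb E)
    \<Longrightarrow> expressible m n b g"
  unfolding expressible_def by metis

lemma expressible_const: "expressible m n b (\<lambda>emb E. emb c)"
  unfolding expressible_def by (rule exI[of _ "PConst c"]) simp

lemma expressible_Icas: "j \<le> b \<Longrightarrow> expressible m n b (\<lambda>emb E. Icas m n E j)"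
  unfolding expressible_def by (rule exI[of _ "VarI j"]) simp

lemma expressible_Ihat: "j \<le> b \<Longrightarrow> expressible m n b (\<lambda>emb E. Ihat m n E j)"
  unfolding expressible_def by (rule exI[of _ "VarIh j"]) simp

lemma expressible_add:
  "expressible m n b f \<Longrightarrow> expressible m n b g \<Longrightarrow> expressible m n b (\<lambda>emb E. f emb E + g emb E)"
  unfolding expressible_def by (metis peval.simps(4) pvars_le.simps(4))

lemma expressible_mult:
  "expressible m n b f \<Longrightarrow> expressible m n b g \<Longrightarrow> expressible m n b (\<lambda>emb E. f emb E * g emb E)"
  unfolding expressible_def by (metis peval.simps(5) pvars_le.simps(5))

lemma expressible_of_nat_mult:
  assumes "expressible m n b f"
  shows "expressible m n b (\<lambda>emb E. of_nat k * f emb E)"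
proof (rule expressible_cong)
  show "expressible m n b (\<lambda>emb E. emb (of_nat k) * f emb E)"
    by (intro expressible_mult expressible_const assms)
qed (simp add: complex_alg_of_nat)

lemma expressible_diff:
  assumes "expressible m n b f" "expressible m n b g"
  shows "expressible m n b (\<lambda>emb E. f emb E - g emb E)"
proof -
  have "expressible m n b (\<lambda>emb E. f emb E + emb (-1) * g emb E)"
    by (intro expressible_add expressible_mult expressible_const assms)
  then show ?thesis
    by (rule expressible_cong) (simp add: complex_alg_minus_one)
qed

lemma expressible_sum:
  "(\<And>i. i < (k::nat) \<Longrightarrow> expressible m n b (f i)) \<Longrightarrow> expressible m n b (\<lambda>emb E. \<Sum>i<k. f i emb E)"
proof (induction k)
  case 0
  show ?case
    by (rule expressible_cong[OF expressible_const[of m n b 0]]) (simp add: complex_alg_zero)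
next
  case (Suc k)
  then show ?case
    by (simp add: expressible_add)
qed

definition expressible_upto :: "nat \<Rightarrow> nat \<Rightarrow> nat \<Rightarrow> 'a::ring_1 itself \<Rightarrow> bool" where
  "expressible_upto m n K (ty :: 'a itself) \<longleftrightarrow>
     (\<forall>t\<le>K. expressible m n K (\<lambda>(emb :: complex \<Rightarrow> 'a) E. tau m n E t)) \<and>
     (\<forall>t. t + 2 \<le> K \<longrightarrow> expressible m n K (\<lambda>(emb :: complex \<Rightarrow> 'a) E. sigma m n E t))"

lemma expressible_upto_tau:
  "expressible_upto m n K TYPE('a::ring_1) \<Longrightarrow> t \<le> K
    \<Longrightarrow> expressible m n K (\<lambda>(emb :: complex \<Rightarrow> 'a) E. tau m n E t)"
  unfolding expressible_upto_def by blast

lemma expressible_upto_sigma: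
  "expressible_upto m n K TYPE('a::ring_1) \<Longrightarrow> t + 2 \<le> K
    \<Longrightarrow> expressible m n K (\<lambda>(emb :: complex \<Rightarrow> 'a) E. sigma m n E t)"
  unfolding expressible_upto_def by blast


lemma casimir_term_expressible:
  assumes K: "expressible_upto m n K TYPE('a::ring_1)" and l: "l < K"
  shows "expressible m n K (\<lambda>(emb :: complex \<Rightarrow> 'a) E. gl_family.casimir_term m n E l)"
proof (rule expressible_cong)
  show "expressible m n K (\<lambda>(emb :: complex \<Rightarrow> 'a) E. tau m n E 1 * Icas m n E l - Icas m n E (Suc l)
      + (\<Sum>t<l. sigma m n E t * Icas m n E (l - 1 - t)))"
    using l by (intro expressible_add expressible_diff expressible_mult expressible_sum
        expressible_Icas expressible_upto_tau[OF K] expressible_upto_sigma[OF K]) auto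
qed (simp add: gl_family.casimir_term_def[OF gl_family.intro])

lemma mixed_tau_0_expressible:
  assumes K: "expressible_upto m n K TYPE('a::ring_1)" and l: "l + 2 \<le> K"
  shows "expressible m n K (\<lambda>(emb :: complex \<Rightarrow> 'a) E. gl_family.mixed_tau m n E 0 l)"
proof (rule expressible_cong)
  show "expressible m n K (\<lambda>(emb :: complex \<Rightarrow> 'a) E. gl_family.casimir_term m n E l - sigma m n E l)"
    using l by (intro expressible_diff casimir_term_expressible[OF K] expressible_upto_sigma[OF K]) auto
qed (simp add: gl_family.mixed_tau_0[OF gl_family.intro])

lemma mixed_expressible:
  assumes K: "expressible_upto m n K TYPE('a::ring_1)"
  shows "j + l + 1 \<le> K \<Longrightarrow> expressible m n K (\<lambda>(emb :: complex \<Rightarrow> 'a) E. gl_family.mixed m n E j l)"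
proof (induction j arbitrary: l)
  case 0
  show ?case
    by (rule expressible_cong[OF expressible_const[of m n K 0]])
      (simp add: complex_alg_zero gl_family.mixed_0[OF gl_family.intro])
next
  case (Suc j)
  show ?case
  proof (rule expressible_cong)
    show "expressible m n K (\<lambda>(emb :: complex \<Rightarrow> 'a) E. gl_family.mixed m n E j (Suc l)
        + (tau m n E j * gl_family.mixed_tau m n E 0 l - gl_family.mixed m n E j l))"
      using Suc.prems by (intro expressible_add expressible_diff expressible_mult Suc.IH
          expressible_upto_tau[OF K] mixed_tau_0_expressible[OF K]) auto
  qed (simp only: gl_family.mixed_Suc[OF gl_family.intro] gl_family.mixed_tau_eq[OF gl_family.intro, where j = j])
qed

lemma mixed_tau_expressible:
  assumes K: "expressible_upto m n K TYPE('a::ring_1)" and "l + 2 \<le> K" "j + l + 1 \<le> K"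
  shows "expressible m n K (\<lambda>(emb :: complex \<Rightarrow> 'a) E. gl_family.mixed_tau m n E j l)"
proof (rule expressible_cong)
  show "expressible m n K (\<lambda>(emb :: complex \<Rightarrow> 'a) E.
      tau m n E j * gl_family.mixed_tau m n E 0 l - gl_family.mixed m n E j l)"
    using assms by (intro expressible_diff expressible_mult expressible_upto_tau[OF K]
        mixed_tau_0_expressible[OF K] mixed_expressible[OF K]) auto
qed (simp only: gl_family.mixed_tau_eq[OF gl_family.intro, where j = j])

lemma sigma_expressible_step:
  assumes K: "expressible_upto m n (Suc L) TYPE('a::ring_1)"
  shows "expressible m n (Suc (Suc L)) (\<lambda>(emb :: complex \<Rightarrow> 'a) E. sigma m n E L)"
proof -
  have lift: "expressible m n (Suc L) f \<Longrightarrow> expressible m n (Suc (Suc L)) f"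
    for f :: "(complex \<Rightarrow> 'a) \<Rightarrow> _"
    by (erule expressible_mono) simp
  have "expressible m n (Suc (Suc L)) (\<lambda>(emb :: complex \<Rightarrow> 'a) E.
      Icas m n E (Suc (Suc L)) - Ihat m n E (Suc (Suc L))
      + of_nat (Suc L) * gl_family.casimir_term m n E L
      + (\<Sum>j<Suc L. \<Sum>t<j. gl_family.mixed_tau m n E (Suc t) (L - 1 - t))
      - tau m n E 1 * tau m n E (Suc L) - (\<Sum>i<L. sigma m n E i * tau m n E (L - i)))"
    by (intro expressible_add expressible_diff expressible_mult expressible_of_nat_mult expressible_sum
        expressible_Icas expressible_Ihat lift casimir_term_expressible[OF K]
        mixed_tau_expressible[OF K] expressible_upto_tau[OF K] expressible_upto_sigma[OF K]) auto
  then show ?thesis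
  proof (rule expressible_cong[OF expressible_mult[OF expressible_const]])
    fix emb :: "complex \<Rightarrow> 'a" and E :: "nat \<Rightarrow> nat \<Rightarrow> 'a"
    assume "complex_alg emb" and "gl_rel m n E"
    show "sigma m n E L = emb (inverse (of_nat (Suc (Suc L)))) * (Icas m n E (Suc (Suc L))
        - Ihat m n E (Suc (Suc L)) + of_nat (Suc L) * gl_family.casimir_term m n E L
        + (\<Sum>j<Suc L. \<Sum>t<j. gl_family.mixed_tau m n E (Suc t) (L - 1 - t))
        - tau m n E 1 * tau m n E (Suc L) - (\<Sum>i<L. sigma m n E i * tau m n E (L - i)))"
      unfolding gl_family.sigma_from_Ihat[OF gl_family.intro[OF \<open>gl_rel m n E\<close>], symmetric]
        mult.assoc[symmetric] complex_alg_inverse_of_nat[OF \<open>complex_alg emb\<close>]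
      by simp
  qed
qed

lemma expressible_upto_Suc:
  assumes K: "expressible_upto m n (Suc L) TYPE('a::ring_1)"
  shows "expressible_upto m n (Suc (Suc L)) TYPE('a)"
proof -
  have lift: "expressible m n (Suc L) f \<Longrightarrow> expressible m n (Suc (Suc L)) f"
    for f :: "(complex \<Rightarrow> 'a) \<Rightarrow> _"
    by (erule expressible_mono) simp
  have sigma: "expressible m n (Suc (Suc L)) (\<lambda>(emb :: complex \<Rightarrow> 'a) E. sigma m n E t)"
    if "t \<le> L" for t
    using that sigma_expressible_step[OF K] lift[OF expressible_upto_sigma[OF K, of t]]
    by (cases "t = L") auto
  have tau_top: "expressible m n (Suc (Suc L)) (\<lambda>(emb :: complex \<Rightarrow> 'a) E. tau m n E (Suc (Suc L)))"
  proof (rule expressible_cong)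
    show "expressible m n (Suc (Suc L)) (\<lambda>(emb :: complex \<Rightarrow> 'a) E.
        tau m n E 1 * tau m n E (Suc L) + (\<Sum>i<Suc L. sigma m n E i * tau m n E (Suc L - 1 - i)))"
      by (intro expressible_add expressible_mult expressible_sum sigma lift
          expressible_upto_tau[OF K]) auto
  qed (simp only: gl_family.tau_Suc[OF gl_family.intro])
  show ?thesis
    unfolding expressible_upto_def
    using tau_top sigma lift[OF expressible_upto_tau[OF K]] by (auto simp: le_Suc_eq)
qed

lemma expressible_upto_one: "expressible_upto m n 1 TYPE('a::ring_1)"
proof -
  have "expressible m n 1 (\<lambda>(emb :: complex \<Rightarrow> 'a) E. tau m n E 0)"
    by (rule expressible_cong[OF expressible_const[of m n 1 1]])
      (simp add: complex_alg_def gl_family.tau_0[OF gl_family.intro])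
  moreover have "expressible m n 1 (\<lambda>(emb :: complex \<Rightarrow> 'a) E. tau m n E 1)"
  proof (rule expressible_cong)
    show "expressible m n 1 (\<lambda>(emb :: complex \<Rightarrow> 'a) E. Icas m n E 1 - Ihat m n E 1)"
      by (intro expressible_diff expressible_Icas expressible_Ihat) auto
  qed (rule gl_family.tau_1_casimir[OF gl_family.intro])
  ultimately show ?thesis
    unfolding expressible_upto_def by (auto simp: le_Suc_eq)
qed

lemma expressible_upto: "1 \<le> K \<Longrightarrow> expressible_upto m n K TYPE('a::ring_1)"
proof (induction K rule: nat_induct_at_least)
  case base
  then show ?case by (rule expressible_upto_one)
next
  case (Suc K)
  then show ?case using expressible_upto_Suc[of m n "K - 1"] by simp
qed

theorem theorem15:
  fixes m n :: nat
  shows "(\<forall>k. \<exists>P. pvars_le k P \<and>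
            (\<forall>(emb :: complex \<Rightarrow> 'a::ring_1) E. complex_alg emb \<and> gl_rel m n E \<longrightarrow>
               tau m n E k = peval emb (Icas m n E) (Ihat m n E) P)) \<and>
         (\<forall>l. \<exists>P. pvars_le (l + 2) P \<and>
            (\<forall>(emb :: complex \<Rightarrow> 'a::ring_1) E. complex_alg emb \<and> gl_rel m n E \<longrightarrow>
               sigma m n E l = peval emb (Icas m n E) (Ihat m n E) P))"
proof (intro conjI allI)
  fix k
  have "expressible m n k (\<lambda>(emb :: complex \<Rightarrow> 'a) E. tau m n E k)"
  proof (cases k)
    case 0
    show ?thesis
      unfolding 0 by (rule expressible_cong[OF expressible_const[of m n 0 1]])
        (simp add: complex_alg_def gl_family.tau_0[OF gl_family.intro])
  next
    case (Suc K)
    then have "expressible_upto m n k TYPE('a)"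
      by (intro expressible_upto) simp
    then show ?thesis
      by (rule expressible_upto_tau) simp
  qed
  then show "\<exists>P. pvars_le k P \<and> (\<forall>(emb :: complex \<Rightarrow> 'a) E. complex_alg emb \<and> gl_rel m n E \<longrightarrow>
      tau m n E k = peval emb (Icas m n E) (Ihat m n E) P)"
    unfolding expressible_def .
next
  fix l
  have "expressible_upto m n (l + 2) TYPE('a)"
    by (intro expressible_upto) simp
  then have "expressible m n (l + 2) (\<lambda>(emb :: complex \<Rightarrow> 'a) E. sigma m n E l)"
    by (rule expressible_upto_sigma) simp
  then show "\<exists>P. pvars_le (l + 2) P \<and> (\<forall>(emb :: complex \<Rightarrow> 'a) E. complex_alg emb \<and> gl_rel m n E \<longrightarrow>
      sigma m n E l = peval emb (Icas m n E) (Ihat m n E) P)"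
    unfolding expressible_def .
qed

end
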